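(* For each $\gamma\in\mathbb{R}$ let $\hat g_{+,\gamma}$ be any minimizer of $\hat h_{+,\gamma}$ over $\mathcal{F}$, and let $\epsilon_{\text{abs}}>0$. Then: (1) $\hat h_{+,\gamma}(\hat g_{+,\gamma})$ is monotonically increasing in $\gamma$; (2) $\hat e_{\text{orig}}(\hat g_{+,\gamma})$ is monotonically decreasing in $\gamma$ for $\gamma\le0$, and if $\epsilon_{\text{abs}}\ge\min_{f\in\mathcal{F}}\hat e_{\text{orig}}(f)$ then $\hat h_{+,0}(\hat g_{+,0})\ge0$ and $\hat e_{\text{orig}}(\hat g_{+,0})\le\epsilon_{\text{abs}}$; (3) the quantity $\left\{\frac{\hat h_{+,\gamma}(\hat g_{+,\gamma})}{\epsilon_{\text{abs}}}-1\right\}\gamma^{-1}$ is monotonically increasing in $\gamma$ over the range where $\hat e_{\text{orig}}(\hat g_{+,\gamma})\le\epsilon_{\text{abs}}$ and $\gamma<0$, and monotonically decreasing in $\gamma$ over the range where $\hat e_{\text{orig}}(\hat g_{+,\gamma})>\epsilon_{\text{abs}}$ and $\gamma<0$.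
   Context: Setting: $\mathcal{F}$ a set of prediction models, $L\ge0$ a loss, and a fixed observed sample $(\mathbf{y}_{[i]},\mathbf{X}_{1[i]},\mathbf{X}_{2[i]})$, $i=1,\dots,n$, $n\ge2$. $\hat e_{\text{orig}}(f)=\frac1n\sum_iL\{f,(\mathbf{y}_{[i]},\mathbf{X}_{1[i]},\mathbf{X}_{2[i]})\}$; $\hat e_{\text{switch}}(f)=\frac1{n(n-1)}\sum_i\sum_{j\ne i}L\{f,(\mathbf{y}_{[j]},\mathbf{X}_{1[i]},\mathbf{X}_{2[j]})\}$. For $\gamma\in\mathbb{R}$, $\hat h_{+,\gamma}(f):=\hat e_{\text{orig}}(f)+\gamma\hat e_{\text{switch}}(f)$. Standing assumptions: $\min_{f\in\mathcal{F}}\hat e_{\text{orig}}(f)>0$ and minimizers of $\hat h_{+,\gamma}$ over $\mathcal{F}$ exist for every $\gamma$. *)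

theory Defs
  imports Main "HOL.Real"
begin

definition e_orig ::
  "('f \<Rightarrow> 'y \<times> 'a \<times> 'b \<Rightarrow> real) \<Rightarrow> (nat \<Rightarrow> 'y) \<Rightarrow> (nat \<Rightarrow> 'a) \<Rightarrow> (nat \<Rightarrow> 'b) \<Rightarrow> nat \<Rightarrow> 'f \<Rightarrow> real"
  where "e_orig L y X1 X2 n f = (1 / real n) * (\<Sum>i<n. L f (y i, X1 i, X2 i))"

definition e_switch ::
  "('f \<Rightarrow> 'y \<times> 'a \<times> 'b \<Rightarrow> real) \<Rightarrow> (nat \<Rightarrow> 'y) \<Rightarrow> (nat \<Rightarrow> 'a) \<Rightarrow> (nat \<Rightarrow> 'b) \<Rightarrow> nat \<Rightarrow> 'f \<Rightarrow> real"
  where "e_switch L y X1 X2 n f =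
    (1 / (real n * (real n - 1))) * (\<Sum>i<n. \<Sum>j\<in>{..<n} - {i}. L f (y j, X1 i, X2 j))"

definition h_plus ::
  "('f \<Rightarrow> 'y \<times> 'a \<times> 'b \<Rightarrow> real) \<Rightarrow> (nat \<Rightarrow> 'y) \<Rightarrow> (nat \<Rightarrow> 'a) \<Rightarrow> (nat \<Rightarrow> 'b) \<Rightarrow> nat \<Rightarrow> real \<Rightarrow> 'f \<Rightarrow> real"
  where "h_plus L y X1 X2 n \<gamma> f = e_orig L y X1 X2 n f + \<gamma> * e_switch L y X1 X2 n f"

end

theory Submission
  imports Defs
begin

text \<open>The optimal value \<open>\<gamma> \<mapsto> min\<^sub>f E f + \<gamma> S f\<close> is an infimum of affine functions with
  slopes \<open>S f \<ge> 0\<close>, hence nondecreasing. Testing the minimizer for \<open>\<gamma>\<^sub>1\<close> in the objective for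
  \<open>\<gamma>\<^sub>2\<close> and vice versa shows that the penalty \<open>S\<close> of the minimizer is antitone in \<open>\<gamma>\<close>, which
  gives the monotonicity of \<open>E\<close> for \<open>\<gamma> \<le> 0\<close>. For the normalized value, write
  \<open>(opt \<gamma> - c)/\<gamma> = (E (g \<gamma>) - c)/\<gamma> + S (g \<gamma>)\<close>: on the negative reals \<open>\<gamma> \<mapsto> a/\<gamma>\<close> is
  increasing if \<open>a \<le> 0\<close> and decreasing if \<open>a \<ge> 0\<close>, and passing from the minimizer at one
  parameter to the objective at the other only improves the bound.\<close>

locale penalized_minimizers =
  fixes F :: "'f set" and E S :: "'f \<Rightarrow> real" and g :: "real \<Rightarrow> 'f"
  assumes minimizer_in: "g \<gamma> \<in> F"
    and minimizer_le: "f \<in> F \<Longrightarrow> E (g \<gamma>) + \<gamma> * S (g \<gamma>) \<le> E f + \<gamma> * S f"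
begin

definition opt :: "real \<Rightarrow> real"
  where "opt \<gamma> = E (g \<gamma>) + \<gamma> * S (g \<gamma>)"

lemma opt_le: "f \<in> F \<Longrightarrow> opt \<gamma> \<le> E f + \<gamma> * S f"
  unfolding opt_def by (rule minimizer_le)

lemma opt_mono:
  assumes S_nonneg: "\<And>f. f \<in> F \<Longrightarrow> S f \<ge> 0" and "\<gamma>\<^sub>1 \<le> \<gamma>\<^sub>2"
  shows "opt \<gamma>\<^sub>1 \<le> opt \<gamma>\<^sub>2"
proof -
  have "opt \<gamma>\<^sub>1 \<le> E (g \<gamma>\<^sub>2) + \<gamma>\<^sub>1 * S (g \<gamma>\<^sub>2)"
    using opt_le minimizer_in by blast
  also have "\<dots> \<le> opt \<gamma>\<^sub>2"
    using \<open>\<gamma>\<^sub>1 \<le> \<gamma>\<^sub>2\<close> S_nonneg[OF minimizer_in] by (simp add: opt_def mult_right_mono)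
  finally show ?thesis .
qed

lemma penalty_antimono:
  assumes "\<gamma>\<^sub>1 \<le> \<gamma>\<^sub>2"
  shows "S (g \<gamma>\<^sub>2) \<le> S (g \<gamma>\<^sub>1)"
proof (cases "\<gamma>\<^sub>1 = \<gamma>\<^sub>2")
  case False
  have "E (g \<gamma>\<^sub>1) + \<gamma>\<^sub>1 * S (g \<gamma>\<^sub>1) \<le> E (g \<gamma>\<^sub>2) + \<gamma>\<^sub>1 * S (g \<gamma>\<^sub>2)"
    and "E (g \<gamma>\<^sub>2) + \<gamma>\<^sub>2 * S (g \<gamma>\<^sub>2) \<le> E (g \<gamma>\<^sub>1) + \<gamma>\<^sub>2 * S (g \<gamma>\<^sub>1)"
    using minimizer_le minimizer_in by blast+
  then have "(\<gamma>\<^sub>2 - \<gamma>\<^sub>1) * (S (g \<gamma>\<^sub>2) - S (g \<gamma>\<^sub>1)) \<le> 0"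
    by (simp add: algebra_simps)
  with assms False show ?thesis
    by (simp add: mult_le_0_iff)
qed simp

lemma E_minimizer_antimono_nonpos:
  assumes "\<gamma>\<^sub>1 \<le> \<gamma>\<^sub>2" and "\<gamma>\<^sub>2 \<le> 0"
  shows "E (g \<gamma>\<^sub>2) \<le> E (g \<gamma>\<^sub>1)"
proof -
  have "E (g \<gamma>\<^sub>2) + \<gamma>\<^sub>2 * S (g \<gamma>\<^sub>2) \<le> E (g \<gamma>\<^sub>1) + \<gamma>\<^sub>2 * S (g \<gamma>\<^sub>1)"
    using minimizer_le minimizer_in by blast
  moreover have "\<gamma>\<^sub>2 * (S (g \<gamma>\<^sub>1) - S (g \<gamma>\<^sub>2)) \<le> 0"
    using assms penalty_antimono by (simp add: mult_nonpos_nonneg)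
  ultimately show ?thesis
    by (simp add: algebra_simps)
qed

lemma E_minimizer_zero_le_INF: "E (g 0) \<le> (INF f\<in>F. E f)"
  using minimizer_in minimizer_le[of _ 0] by (intro cINF_greatest) auto

lemma opt_shifted_quotient_mono:
  assumes "\<gamma>\<^sub>1 \<le> \<gamma>\<^sub>2" and "\<gamma>\<^sub>2 < 0" and "E (g \<gamma>\<^sub>1) \<le> c"
  shows "(opt \<gamma>\<^sub>1 - c) / \<gamma>\<^sub>1 \<le> (opt \<gamma>\<^sub>2 - c) / \<gamma>\<^sub>2"
proof -
  have "(opt \<gamma>\<^sub>1 - c) / \<gamma>\<^sub>1 = (E (g \<gamma>\<^sub>1) - c) / \<gamma>\<^sub>1 + S (g \<gamma>\<^sub>1)"
    using assms by (simp add: opt_def field_simps)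
  also have "\<dots> \<le> (E (g \<gamma>\<^sub>1) - c) / \<gamma>\<^sub>2 + S (g \<gamma>\<^sub>1)"
  proof -
    have "(E (g \<gamma>\<^sub>1) - c) / \<gamma>\<^sub>1 \<le> (E (g \<gamma>\<^sub>1) - c) / \<gamma>\<^sub>2"
      using assms by (simp add: divide_simps mult_left_mono_neg)
    then show ?thesis by simp
  qed
  also have "\<dots> = (E (g \<gamma>\<^sub>1) + \<gamma>\<^sub>2 * S (g \<gamma>\<^sub>1) - c) / \<gamma>\<^sub>2"
    using assms by (simp add: field_simps)
  also have "\<dots> \<le> (opt \<gamma>\<^sub>2 - c) / \<gamma>\<^sub>2"
    using opt_le[OF minimizer_in, of \<gamma>\<^sub>2 \<gamma>\<^sub>1] \<open>\<gamma>\<^sub>2 < 0\<close> by (simp add: divide_simps)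
  finally show ?thesis .
qed

lemma opt_shifted_quotient_antimono:
  assumes "\<gamma>\<^sub>1 \<le> \<gamma>\<^sub>2" and "\<gamma>\<^sub>2 < 0" and "c \<le> E (g \<gamma>\<^sub>2)"
  shows "(opt \<gamma>\<^sub>2 - c) / \<gamma>\<^sub>2 \<le> (opt \<gamma>\<^sub>1 - c) / \<gamma>\<^sub>1"
proof -
  have "(opt \<gamma>\<^sub>2 - c) / \<gamma>\<^sub>2 = (E (g \<gamma>\<^sub>2) - c) / \<gamma>\<^sub>2 + S (g \<gamma>\<^sub>2)"
    using assms by (simp add: opt_def field_simps)
  also have "\<dots> \<le> (E (g \<gamma>\<^sub>2) - c) / \<gamma>\<^sub>1 + S (g \<gamma>\<^sub>2)"
  proof -
    have "(E (g \<gamma>\<^sub>2) - c) / \<gamma>\<^sub>2 \<le> (E (g \<gamma>\<^sub>2) - c) / \<gamma>\<^sub>1"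
      using assms by (simp add: divide_simps mult_left_mono)
    then show ?thesis by simp
  qed
  also have "\<dots> = (E (g \<gamma>\<^sub>2) + \<gamma>\<^sub>1 * S (g \<gamma>\<^sub>2) - c) / \<gamma>\<^sub>1"
    using assms by (simp add: field_simps)
  also have "\<dots> \<le> (opt \<gamma>\<^sub>1 - c) / \<gamma>\<^sub>1"
    using opt_le[OF minimizer_in, of \<gamma>\<^sub>1 \<gamma>\<^sub>2] assms by (simp add: divide_simps)
  finally show ?thesis .
qed

end

lemma e_orig_nonneg:
  assumes "\<And>f z. L f z \<ge> 0"
  shows "e_orig L y X1 X2 n f \<ge> 0"
  using assms by (simp add: e_orig_def sum_nonneg)

lemma e_switch_nonneg:
  assumes "\<And>f z. L f z \<ge> 0" and "n \<ge> 2"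
  shows "e_switch L y X1 X2 n f \<ge> 0"
proof -
  have "real n * (real n - 1) > 0"
    using \<open>n \<ge> 2\<close> by simp
  then show ?thesis
    using assms(1) by (simp add: e_switch_def sum_nonneg)
qed

lemma normalized_quotient_le:
  fixes eps :: real
  assumes "eps > 0" and "(h\<^sub>1 - eps) / \<gamma>\<^sub>1 \<le> (h\<^sub>2 - eps) / \<gamma>\<^sub>2"
  shows "(h\<^sub>1 / eps - 1) / \<gamma>\<^sub>1 \<le> (h\<^sub>2 / eps - 1) / \<gamma>\<^sub>2"
proof -
  have "(h / eps - 1) / \<gamma> = ((h - eps) / \<gamma>) / eps" for h \<gamma>
    using \<open>eps > 0\<close> by (simp add: field_simps)
  moreover have "((h\<^sub>1 - eps) / \<gamma>\<^sub>1) / eps \<le> ((h\<^sub>2 - eps) / \<gamma>\<^sub>2) / eps"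
    using assms by (intro divide_right_mono) auto
  ultimately show ?thesis
    by metis
qed

theorem lemma20:
  fixes F :: "'f set"
    and L :: "'f \<Rightarrow> 'y \<times> 'a \<times> 'b \<Rightarrow> real"
    and y :: "nat \<Rightarrow> 'y" and X1 :: "nat \<Rightarrow> 'a" and X2 :: "nat \<Rightarrow> 'b"
    and n :: nat
    and g :: "real \<Rightarrow> 'f"
    and eps :: real
  assumes n2: "n \<ge> 2"
    and L_nonneg: "\<And>f z. L f z \<ge> 0"
    and orig_min_exists: "\<exists>f0\<in>F. \<forall>f\<in>F. e_orig L y X1 X2 n f0 \<le> e_orig L y X1 X2 n f"
    and orig_min_pos: "(INF f\<in>F. e_orig L y X1 X2 n f) > 0"
    and g_in: "\<And>\<gamma>. g \<gamma> \<in> F"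
    and g_min: "\<And>\<gamma> f. f \<in> F \<Longrightarrow> h_plus L y X1 X2 n \<gamma> (g \<gamma>) \<le> h_plus L y X1 X2 n \<gamma> f"
    and eps_pos: "eps > 0"
  shows "(\<forall>\<gamma>1 \<gamma>2. \<gamma>1 \<le> \<gamma>2 \<longrightarrow>
            h_plus L y X1 X2 n \<gamma>1 (g \<gamma>1) \<le> h_plus L y X1 X2 n \<gamma>2 (g \<gamma>2))
       \<and> (\<forall>\<gamma>1 \<gamma>2. \<gamma>1 \<le> \<gamma>2 \<and> \<gamma>2 \<le> 0 \<longrightarrow>
            e_orig L y X1 X2 n (g \<gamma>2) \<le> e_orig L y X1 X2 n (g \<gamma>1))
       \<and> (eps \<ge> (INF f\<in>F. e_orig L y X1 X2 n f) \<longrightarrow>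
            h_plus L y X1 X2 n 0 (g 0) \<ge> 0 \<and> e_orig L y X1 X2 n (g 0) \<le> eps)
       \<and> (\<forall>\<gamma>1 \<gamma>2. \<gamma>1 \<le> \<gamma>2 \<and> \<gamma>2 < 0
            \<and> e_orig L y X1 X2 n (g \<gamma>1) \<le> eps \<and> e_orig L y X1 X2 n (g \<gamma>2) \<le> eps \<longrightarrow>
            (h_plus L y X1 X2 n \<gamma>1 (g \<gamma>1) / eps - 1) / \<gamma>1
              \<le> (h_plus L y X1 X2 n \<gamma>2 (g \<gamma>2) / eps - 1) / \<gamma>2)
       \<and> (\<forall>\<gamma>1 \<gamma>2. \<gamma>1 \<le> \<gamma>2 \<and> \<gamma>2 < 0
            \<and> e_orig L y X1 X2 n (g \<gamma>1) > eps \<and> e_orig L y X1 X2 n (g \<gamma>2) > eps \<longrightarrow>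
            (h_plus L y X1 X2 n \<gamma>2 (g \<gamma>2) / eps - 1) / \<gamma>2
              \<le> (h_plus L y X1 X2 n \<gamma>1 (g \<gamma>1) / eps - 1) / \<gamma>1)"
proof -
  interpret penalized_minimizers F "e_orig L y X1 X2 n" "e_switch L y X1 X2 n" g
    using g_in g_min by unfold_locales (auto simp: h_plus_def)
  have h_opt: "h_plus L y X1 X2 n \<gamma> (g \<gamma>) = opt \<gamma>" for \<gamma>
    by (simp add: h_plus_def opt_def)
  have "opt \<gamma>\<^sub>1 \<le> opt \<gamma>\<^sub>2" if "\<gamma>\<^sub>1 \<le> \<gamma>\<^sub>2" for \<gamma>\<^sub>1 \<gamma>\<^sub>2
    using opt_mono[OF e_switch_nonneg[OF L_nonneg n2] that] .
  moreover have "opt 0 \<ge> 0"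
    by (simp add: opt_def e_orig_nonneg L_nonneg)
  moreover have "(opt \<gamma>\<^sub>1 / eps - 1) / \<gamma>\<^sub>1 \<le> (opt \<gamma>\<^sub>2 / eps - 1) / \<gamma>\<^sub>2"
    if "\<gamma>\<^sub>1 \<le> \<gamma>\<^sub>2" "\<gamma>\<^sub>2 < 0" "e_orig L y X1 X2 n (g \<gamma>\<^sub>1) \<le> eps" for \<gamma>\<^sub>1 \<gamma>\<^sub>2
    using normalized_quotient_le[OF eps_pos opt_shifted_quotient_mono[OF that]] .
  moreover have "(opt \<gamma>\<^sub>2 / eps - 1) / \<gamma>\<^sub>2 \<le> (opt \<gamma>\<^sub>1 / eps - 1) / \<gamma>\<^sub>1"
    if "\<gamma>\<^sub>1 \<le> \<gamma>\<^sub>2" "\<gamma>\<^sub>2 < 0" "eps \<le> e_orig L y X1 X2 n (g \<gamma>\<^sub>2)" for \<gamma>\<^sub>1 \<gamma>\<^sub>2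
    using normalized_quotient_le[OF eps_pos opt_shifted_quotient_antimono[OF that]] .
  ultimately show ?thesis
    using E_minimizer_antimono_nonpos E_minimizer_zero_le_INF
    by (auto simp: h_opt less_imp_le)
qed

end
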